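(* Let $R$ be a finite set of terminal pairs in $\mathbb{R}^2$ such that every pair $(l,r)\in R$ satisfies $x(l)<0\le x(r)$, let $N_{\mathrm{opt}}$ be an optimum solution of 2D-GMMN for $R$, and let $N^{+}_{\mathrm{hor}}$ be the set of horizontal segments of the right part of $N_{\mathrm{opt}}$. Let $(P_x)_{x\ge0}$ be the piercings produced by the sweep described in the context. Then for every $x\ge 0$, $$|P_x|\le 2\cdot\Big|\ell_x\cap \bigcup N^{+}_{\mathrm{hor}}\Big|.$$
   Context: A rectilinear network is a finite union of axis-parallel segments; an M-path between $p,q$ is a path of axis-parallel segments of total length $\|p-q\|_1$. An optimum solution of 2D-GMMN for a set $R$ of unordered point pairs is a minimum-length rectilinear network containing an M-path between the two points of every pair. Each pair is identified with its bounding box (smallest axis-parallel rectangle containing both points). The right part of a geometric object is its intersection with the closed half-plane $\{x\ge 0\}$; the right part of a set of objects is the set of right parts; $R^+$ denotes the right part of (the bounding boxes of) $R$. For $x\ge0$, $\ell_x$ is the vertical line at abscissa $x$, and $\mathcal{I}_x$ is the set of (nonempty) intervals $\ell_x\cap r$, $r\in R^+$. A piercing of $\mathcal{I}_x$ is a finite set of points on $\ell_x$ such that every interval of $\mathcal{I}_x$ contains one of them; it is minimal if no proper subset is a piercing. The sweep: event points are the $x$-coordinates of the right edges of the rectangles in $R^+$. $P_0$ is an arbitrary minimal piercing of $\mathcal{I}_0$. For consecutive event points $x'<x''$ and $x'<x\le x''$, $P_x$ is obtained from (the horizontal translate to $\ell_x$ of) $P_{x'}$ by iteratively removing points as long as the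 remaining set still pierces $\mathcal{I}_x$, stopping when it is a minimal piercing of $\mathcal{I}_x$ (the same set of $y$-coordinates is used for all $x\in(x',x'']$). After the last event point, $\mathcal{I}_x=\emptyset$ and $P_x=\emptyset$. *)

theory Defs
  imports "HOL-Analysis.Analysis"
begin

type_synonym point = "real \<times> real"

definition l1 :: "point \<Rightarrow> point \<Rightarrow> real" where
  "l1 p q = \<bar>fst p - fst q\<bar> + \<bar>snd p - snd q\<bar>"

definition axis_par :: "point \<Rightarrow> point \<Rightarrow> bool" where
  "axis_par a b \<longleftrightarrow> fst a = fst b \<or> snd a = snd b"

definition rect_network :: "point set \<Rightarrow> bool" where
  "rect_network N \<longleftrightarrow> (\<exists>S. finite S \<and> (\<forall>(a,b)\<in>S. axis_par a b) \<and>
      N = (\<Union>(a,b)\<in>S. closed_segment a b))"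

text \<open>Length of a rectilinear network (= its 1-dimensional measure):
  the least total length of a finite family of axis-parallel segments whose union is N.\<close>
definition net_length :: "point set \<Rightarrow> real" where
  "net_length N = Inf {(\<Sum>(a,b)\<in>S. l1 a b) | S. finite S \<and> (\<forall>(a,b)\<in>S. axis_par a b) \<and>
      N = (\<Union>(a,b)\<in>S. closed_segment a b)}"

definition M_path :: "point set \<Rightarrow> point \<Rightarrow> point \<Rightarrow> point list \<Rightarrow> bool" where
  "M_path N p q vs \<longleftrightarrow> vs \<noteq> [] \<and> hd vs = p \<and> last vs = q \<and>
     (\<forall>i < length vs - 1. axis_par (vs!i) (vs!Suc i) \<and> closed_segment (vs!i) (vs!Suc i) \<subseteq> N) \<and>
     (\<Sum>i < length vs - 1. l1 (vs!i) (vs!Suc i)) = l1 p q"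

definition has_M_path :: "point set \<Rightarrow> point \<Rightarrow> point \<Rightarrow> bool" where
  "has_M_path N p q \<longleftrightarrow> (\<exists>vs. M_path N p q vs)"

definition feasible_GMMN :: "(point \<times> point) set \<Rightarrow> point set \<Rightarrow> bool" where
  "feasible_GMMN R N \<longleftrightarrow> rect_network N \<and> (\<forall>(p,q)\<in>R. has_M_path N p q)"

definition optimum_GMMN :: "(point \<times> point) set \<Rightarrow> point set \<Rightarrow> bool" where
  "optimum_GMMN R N \<longleftrightarrow> feasible_GMMN R N \<and>
     (\<forall>N'. feasible_GMMN R N' \<longrightarrow> net_length N \<le> net_length N')"

definition bbox :: "point \<times> point \<Rightarrow> point set" where
  "bbox pq = {z. min (fst (fst pq)) (fst (snd pq)) \<le> fst z \<and> fst z \<le> max (fst (fst pq)) (fst (snd pq)) \<and>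
                 min (snd (fst pq)) (snd (snd pq)) \<le> snd z \<and> snd z \<le> max (snd (fst pq)) (snd (snd pq))}"

definition right_part :: "point set \<Rightarrow> point set" where
  "right_part A = A \<inter> {z. 0 \<le> fst z}"

text \<open>The family I_x of nonempty intervals cut out of the right parts of the bounding boxes
  by the vertical line at abscissa x; intervals are represented by their sets of y-coordinates.\<close>
definition Ivals :: "(point \<times> point) set \<Rightarrow> real \<Rightarrow> real set set" where
  "Ivals R x = {{y. (x, y) \<in> right_part (bbox pq)} | pq. pq \<in> R} - {{}}"

text \<open>Piercings of a family of intervals on a vertical line (points given by their y-coordinates).\<close>
definition piercing :: "real set set \<Rightarrow> real set \<Rightarrow> bool" where
  "piercing I P \<longleftrightarrow> finite P \<and> (\<forall>J\<in>I. J \<inter> P \<noteq> {})"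

definition min_piercing :: "real set set \<Rightarrow> real set \<Rightarrow> bool" where
  "min_piercing I P \<longleftrightarrow> piercing I P \<and> (\<forall>Q. Q \<subset> P \<longrightarrow> \<not> piercing I Q)"

text \<open>Possible outcomes of iteratively removing points from P while it still pierces I,
  stopping when a minimal piercing is reached.\<close>
inductive reduce_piercing :: "real set set \<Rightarrow> real set \<Rightarrow> real set \<Rightarrow> bool" where
  stop: "min_piercing I P \<Longrightarrow> reduce_piercing I P P"
| step: "p \<in> P \<Longrightarrow> \<not> min_piercing I P \<Longrightarrow> piercing I (P - {p}) \<Longrightarrow>
         reduce_piercing I (P - {p}) Q \<Longrightarrow> reduce_piercing I P Q"

text \<open>Event points: x-coordinates of the right edges of the right parts of the boxes.\<close>
definition events :: "(point \<times> point) set \<Rightarrow> real set" where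
  "events R = {Sup (fst ` right_part (bbox pq)) | pq. pq \<in> R}"

text \<open>P is a run of the sweep for R (P x is the set of y-coordinates of P_x).
  The sweep starts at 0; breakpoints are 0 and the event points.\<close>
definition sweep :: "(point \<times> point) set \<Rightarrow> (real \<Rightarrow> real set) \<Rightarrow> bool" where
  "sweep R P \<longleftrightarrow>
     min_piercing (Ivals R 0) (P 0) \<and>
     (\<forall>x' x''. x' \<in> insert 0 (events R) \<and> x'' \<in> insert 0 (events R) \<and> x' < x'' \<and>
        \<not> (\<exists>e\<in>insert 0 (events R). x' < e \<and> e < x'') \<longrightarrow>
        (\<exists>Q. reduce_piercing (Ivals R x'') (P x') Q \<and> (\<forall>x. x' < x \<and> x \<le> x'' \<longrightarrow> P x = Q))) \<and>
     (\<forall>x. (\<forall>e\<in>insert 0 (events R). e < x) \<longrightarrow> P x = {})"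

definition hor_part :: "point set \<Rightarrow> point set" where
  "hor_part N = \<Union>{closed_segment a b | a b. snd a = snd b \<and> a \<noteq> b \<and> closed_segment a b \<subseteq> N}"

end

theory Submission
  imports Defs
begin

text \<open>Between consecutive event points the family I_x does not change, so every nonempty P_x is a
  minimal piercing of I_x. An M-path has total variation in each coordinate equal to its
  displacement; hence the M-path of a pair (l, r) meets every vertical line at abscissa
  x \<in> [0, x(r)] on a horizontal segment of the network, at a height between y(l) and y(r). So the
  heights of the horizontal part of the network on that line pierce I_x. A minimal piercing of
  intervals has a private interval for each of its points; sending each point to a piercing height
  in its private interval, together with the side of the point relative to that height, is
  injective, since of two points on the same side of one height the nearer one would lie in the
  private interval of the farther one.\<close>

lemma exists_upcrossing:
  fixes f :: "nat \<Rightarrow> 'a::linorder"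
  assumes "f 0 < x" "x \<le> f n"
  shows "\<exists>i<n. f i < x \<and> x \<le> f (Suc i)"
  using assms
proof (induction n)
  case 0
  then show ?case by simp
next
  case (Suc n)
  show ?case
  proof (cases "x \<le> f n")
    case True
    then show ?thesis using Suc by (metis less_Suc_eq)
  next
    case False
    then show ?thesis using Suc by (metis lessI not_le)
  qed
qed

lemma abs_diff_le_sum_abs_steps:
  fixes f :: "nat \<Rightarrow> 'a::ordered_ab_group_add_abs"
  assumes "i \<le> n"
  shows "\<bar>f n - f i\<bar> \<le> (\<Sum>j=i..<n. \<bar>f (Suc j) - f j\<bar>)"
  using sum_abs[of "\<lambda>j. f (Suc j) - f j" "{i..<n}"] sum_Suc_diff'[OF assms, of f] by simp

lemma between_endpoints_if_sum_abs_steps_le: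
  fixes g :: "nat \<Rightarrow> real"
  assumes "i \<le> n" and steps: "(\<Sum>j<n. \<bar>g (Suc j) - g j\<bar>) \<le> \<bar>g n - g 0\<bar>"
  shows "min (g 0) (g n) \<le> g i \<and> g i \<le> max (g 0) (g n)"
proof -
  have "(\<Sum>j<n. \<bar>g (Suc j) - g j\<bar>) = (\<Sum>j=0..<i. \<bar>g (Suc j) - g j\<bar>) + (\<Sum>j=i..<n. \<bar>g (Suc j) - g j\<bar>)"
    using assms(1) by (simp add: lessThan_atLeast0 sum.atLeastLessThan_concat)
  then have "\<bar>g i - g 0\<bar> + \<bar>g n - g i\<bar> \<le> \<bar>g n - g 0\<bar>"
    using abs_diff_le_sum_abs_steps[of 0 i g] abs_diff_le_sum_abs_steps[OF assms(1), of g] steps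
    by linarith
  then show ?thesis by (auto simp: abs_if split: if_splits)
qed

lemma M_path_first_last:
  assumes "M_path N p q vs"
  shows "vs!0 = p" "vs!(length vs - 1) = q"
proof -
  have "vs \<noteq> []" "hd vs = p" "last vs = q" using assms unfolding M_path_def by auto
  then show "vs!0 = p" "vs!(length vs - 1) = q" by (simp_all add: hd_conv_nth last_conv_nth)
qed

lemma M_path_snd_between:
  assumes "M_path N p q vs" "i < length vs"
  shows "min (snd p) (snd q) \<le> snd (vs!i) \<and> snd (vs!i) \<le> max (snd p) (snd q)"
proof -
  define n where "n = length vs - 1"
  define f where "f j = fst (vs!j)" for j
  define g where "g j = snd (vs!j)" for j
  have v0: "vs!0 = p" and vn: "vs!n = q" using M_path_first_last[OF assms(1)] unfolding n_def by auto
  have "(\<Sum>j<n. l1 (vs!j) (vs!Suc j)) = l1 p q" using assms(1) unfolding M_path_def n_def by blast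
  then have "(\<Sum>j<n. \<bar>f (Suc j) - f j\<bar>) + (\<Sum>j<n. \<bar>g (Suc j) - g j\<bar>) = \<bar>f n - f 0\<bar> + \<bar>g n - g 0\<bar>"
    using v0 vn unfolding l1_def f_def g_def by (simp add: sum.distrib abs_minus_commute)
  moreover have "\<bar>f n - f 0\<bar> \<le> (\<Sum>j<n. \<bar>f (Suc j) - f j\<bar>)"
    using abs_diff_le_sum_abs_steps[of 0 n f] by (simp add: lessThan_atLeast0)
  ultimately have "(\<Sum>j<n. \<bar>g (Suc j) - g j\<bar>) \<le> \<bar>g n - g 0\<bar>" by linarith
  moreover have "i \<le> n" using assms(2) unfolding n_def by simp
  ultimately have "min (g 0) (g n) \<le> g i \<and> g i \<le> max (g 0) (g n)"
    by (intro between_endpoints_if_sum_abs_steps_le)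
  then show ?thesis using v0 vn unfolding g_def by simp
qed

lemma M_path_crosses_vline:
  assumes "M_path N p q vs" "fst p < x" "x \<le> fst q"
  shows "\<exists>y. (x, y) \<in> hor_part N \<and> min (snd p) (snd q) \<le> y \<and> y \<le> max (snd p) (snd q)"
proof -
  define n where "n = length vs - 1"
  have steps: "\<forall>i<n. axis_par (vs!i) (vs!Suc i) \<and> closed_segment (vs!i) (vs!Suc i) \<subseteq> N"
    using assms(1) unfolding M_path_def n_def by blast
  have "fst (vs!0) < x" "x \<le> fst (vs!n)"
    using assms M_path_first_last[OF assms(1)] unfolding n_def by auto
  then obtain i where i: "i < n" "fst (vs!i) < x" "x \<le> fst (vs!Suc i)"
    using exists_upcrossing[of "\<lambda>j. fst (vs!j)" x n] by auto
  define a where "a = vs!i"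
  define b where "b = vs!Suc i"
  have ab: "axis_par a b" "closed_segment a b \<subseteq> N" "fst a < x" "x \<le> fst b"
    using steps i unfolding a_def b_def by auto
  then have "snd a = snd b" "a \<noteq> b" unfolding axis_par_def by auto
  moreover from this have "(x, snd a) \<in> closed_segment a b"
    using ab by (simp add: closed_segment_same_snd closed_segment_eq_real_ivl)
  ultimately have "(x, snd a) \<in> hor_part N"
    unfolding hor_part_def using ab(2) by blast
  moreover have "min (snd p) (snd q) \<le> snd a \<and> snd a \<le> max (snd p) (snd q)"
    using M_path_snd_between[OF assms(1), of i] i(1) unfolding a_def n_def by simp
  ultimately show ?thesis by blast
qed

lemma finite_hor_segment_Int_axis_par_segment:
  assumes "axis_par a b" "snd c = snd d" "\<not> (snd a = snd b \<and> snd a = snd c)"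
  shows "finite (closed_segment c d \<inter> closed_segment a b)"
proof (cases "fst a = fst b")
  case True
  then have "closed_segment c d \<inter> closed_segment a b \<subseteq> {(fst a, snd c)}"
    using assms(2) by (auto simp: closed_segment_same_fst closed_segment_same_snd)
  then show ?thesis by (rule finite_subset) simp
next
  case False
  then have "closed_segment c d \<inter> closed_segment a b = {}"
    using assms by (auto simp: axis_par_def closed_segment_same_snd)
  then show ?thesis by simp
qed

lemma hor_segment_in_network_on_level:
  assumes S: "finite S" "\<forall>(a, b)\<in>S. axis_par a b"
    and cd: "snd c = snd d" "c \<noteq> d" "closed_segment c d \<subseteq> (\<Union>(a, b)\<in>S. closed_segment a b)"
  shows "\<exists>(a, b)\<in>S. snd a = snd c"
proof (rule ccontr)
  assume "\<not> (\<exists>(a, b)\<in>S. snd a = snd c)"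
  then have "\<forall>(a, b)\<in>S. finite (closed_segment c d \<inter> closed_segment a b)"
    using S(2) cd(1) finite_hor_segment_Int_axis_par_segment by fast
  then have "finite (\<Union>(a, b)\<in>S. closed_segment c d \<inter> closed_segment a b)"
    using S(1) by auto
  moreover have "closed_segment c d = (\<Union>(a, b)\<in>S. closed_segment c d \<inter> closed_segment a b)"
    using cd(3) by blast
  ultimately show False using cd(2) by simp
qed

lemma finite_vline_Int_hor_part:
  assumes "rect_network N"
  shows "finite ({z. fst z = x} \<inter> hor_part N)"
proof -
  obtain S where S: "finite S" "\<forall>(a, b)\<in>S. axis_par a b" "N = (\<Union>(a, b)\<in>S. closed_segment a b)"
    using assms unfolding rect_network_def by blast
  have "{z. fst z = x} \<inter> hor_part N \<subseteq> {x} \<times> (\<lambda>(a, b). snd a) ` S"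
  proof
    fix z assume z: "z \<in> {z. fst z = x} \<inter> hor_part N"
    then obtain c d where cd: "z \<in> closed_segment c d" "snd c = snd d" "c \<noteq> d" "closed_segment c d \<subseteq> N"
      unfolding hor_part_def by blast
    then have "snd z = snd c" by (auto simp: closed_segment_same_snd)
    moreover have "\<exists>(a, b)\<in>S. snd a = snd c"
      using hor_segment_in_network_on_level[OF S(1,2) cd(2,3)] cd(4) S(3) by blast
    ultimately show "z \<in> {x} \<times> (\<lambda>(a, b). snd a) ` S"
      using z by (force simp: mem_Times_iff)
  qed
  then show ?thesis using S(1) finite_subset by blast
qed

lemma min_piercing_private_member:
  assumes "min_piercing I P" "p \<in> P"
  shows "\<exists>J\<in>I. J \<inter> P = {p}"
proof -
  have "\<not> piercing I (P - {p})" using assms unfolding min_piercing_def by blast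
  then obtain J where "J \<in> I" "J \<inter> (P - {p}) = {}"
    using assms(1) unfolding min_piercing_def piercing_def by auto
  moreover have "J \<inter> P \<noteq> {}" using assms(1) \<open>J \<in> I\<close> unfolding min_piercing_def piercing_def by auto
  ultimately show ?thesis by blast
qed

lemma card_min_piercing_intervals_le:
  assumes P: "min_piercing I P" and H: "piercing I H" and intervals: "\<forall>J\<in>I. is_interval J"
  shows "card P \<le> 2 * card H"
proof -
  obtain J where J: "\<And>p. p \<in> P \<Longrightarrow> J p \<in> I \<and> J p \<inter> P = {p}"
    using min_piercing_private_member[OF P] by metis
  have "\<forall>p\<in>P. \<exists>y. y \<in> J p \<inter> H" using J H unfolding piercing_def by blast
  then obtain h where h: "\<And>p. p \<in> P \<Longrightarrow> h p \<in> J p \<inter> H" by metis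
  have between: "c \<in> J p" if "p \<in> P" "a \<in> J p" "b \<in> J p" "a \<le> c" "c \<le> b" for p a b c
    using intervals J[OF that(1)] that(2-) unfolding is_interval_1 by blast
  have opposite_sides: "(p \<le> h p) \<noteq> (q \<le> h q)" if "p \<in> P" "q \<in> P" "p < q" "h p = h q" for p q
  proof
    assume side: "(p \<le> h p) = (q \<le> h q)"
    show False
    proof (cases "q \<le> h q")
      case True
      have "p \<in> J p" "h p \<in> J p" using J[OF that(1)] h[OF that(1)] by auto
      moreover have "p \<le> q" "q \<le> h p" using that(3,4) True by auto
      ultimately have "q \<in> J p" using between that(1) by blast
      then show False using J[OF that(1)] that(2,3) by auto
    next
      case False
      have "q \<in> J q" "h q \<in> J q" using J[OF that(2)] h[OF that(2)] by auto
      moreover have "h q \<le> p" "p \<le> q" using that(3,4) False side by auto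
      ultimately have "p \<in> J q" using between that(2) by blast
      then show False using J[OF that(2)] that(1,3) by auto
    qed
  qed
  have "inj_on (\<lambda>p. (h p, p \<le> h p)) P"
    by (rule inj_onI) (metis Pair_inject linorder_neqE opposite_sides)
  moreover have "(\<lambda>p. (h p, p \<le> h p)) ` P \<subseteq> H \<times> UNIV" using h by auto
  moreover have "finite H" using H unfolding piercing_def by simp
  ultimately have "card P \<le> card (H \<times> (UNIV :: bool set))"
    by (metis card_inj_on_le finite_SigmaI finite_code)
  then show ?thesis by (simp add: card_cartesian_product)
qed

lemma vline_section_right_part_bbox:
  assumes "fst l < 0" "0 \<le> fst r" "0 \<le> x"
  shows "{y. (x, y) \<in> right_part (bbox (l, r))} =
    (if x \<le> fst r then {min (snd l) (snd r) .. max (snd l) (snd r)} else {})"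
  using assms by (auto simp: right_part_def bbox_def)

lemma Ivals_memE:
  assumes "J \<in> Ivals R x"
  obtains l r where "(l, r) \<in> R" "J = {y. (x, y) \<in> right_part (bbox (l, r))}" "J \<noteq> {}"
proof -
  obtain pq where "pq \<in> R" "J = {y. (x, y) \<in> right_part (bbox pq)}" "J \<noteq> {}"
    using assms unfolding Ivals_def by blast
  then show ?thesis using that[of "fst pq" "snd pq"] by simp
qed

lemma Ivals_is_interval:
  assumes "\<forall>(l, r)\<in>R. fst l < 0 \<and> 0 \<le> fst r" "0 \<le> x" "J \<in> Ivals R x"
  shows "is_interval J"
proof -
  obtain l r where "(l, r) \<in> R" "J = {y. (x, y) \<in> right_part (bbox (l, r))}"
    using assms(3) by (rule Ivals_memE)
  then show ?thesis using assms(1,2) vline_section_right_part_bbox[of l r x] by auto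
qed

lemma Ivals_eq_if_same_active_pairs:
  assumes "\<forall>(l, r)\<in>R. fst l < 0 \<and> 0 \<le> fst r" "0 \<le> x" "0 \<le> x'"
    and "\<forall>(l, r)\<in>R. x \<le> fst r \<longleftrightarrow> x' \<le> fst r"
  shows "Ivals R x = Ivals R x'"
proof -
  have "{y. (x, y) \<in> right_part (bbox (l, r))} = {y. (x', y) \<in> right_part (bbox (l, r))}"
    if "(l, r) \<in> R" for l r
  proof -
    have h: "fst l < 0" "0 \<le> fst r" using assms(1) that by auto
    have "x \<le> fst r \<longleftrightarrow> x' \<le> fst r" using assms(4) that by auto
    then show ?thesis
      using vline_section_right_part_bbox[OF h assms(2)] vline_section_right_part_bbox[OF h assms(3)] by simp
  qed
  then show ?thesis unfolding Ivals_def by fastforce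
qed

lemma right_end_in_events:
  assumes "(l, r) \<in> R" "fst l < 0" "0 \<le> fst r"
  shows "fst r \<in> events R"
proof -
  have "Sup (fst ` right_part (bbox (l, r))) = fst r"
  proof (rule cSup_eq_maximum)
    show "fst r \<in> fst ` right_part (bbox (l, r))"
      using assms by (intro image_eqI[of _ _ r]) (auto simp: right_part_def bbox_def)
  qed (use assms in \<open>auto simp: right_part_def bbox_def\<close>)
  then have "\<exists>pq. fst r = Sup (fst ` right_part (bbox pq)) \<and> pq \<in> R" using assms(1) by metis
  then show ?thesis unfolding events_def by (rule CollectI)
qed

lemma finite_events:
  assumes "finite R"
  shows "finite (events R)"
proof -
  have "events R = (\<lambda>pq. Sup (fst ` right_part (bbox pq))) ` R" unfolding events_def by blast
  then show ?thesis using assms by simp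
qed

lemma reduce_piercing_min_piercing: "reduce_piercing I P Q \<Longrightarrow> min_piercing I Q"
  by (induction rule: reduce_piercing.induct) auto

lemma consecutive_elements_around:
  fixes E :: "'a::linorder set"
  assumes "finite E" "e \<in> E" "e < x" "e' \<in> E" "x \<le> e'"
  obtains x' x'' where "x' \<in> E" "x'' \<in> E" "x' < x" "x \<le> x''" "\<not> (\<exists>e\<in>E. x' < e \<and> e < x'')"
proof
  define A where "A = {e\<in>E. x \<le> e}"
  define B where "B = {e\<in>E. e < x}"
  have A: "finite A" "A \<noteq> {}" and B: "finite B" "B \<noteq> {}" using assms unfolding A_def B_def by auto
  have "Min A \<in> A" "Max B \<in> B" using Min_in[OF A] Max_in[OF B] .
  then show "Max B \<in> E" "Min A \<in> E" "Max B < x" "x \<le> Min A" unfolding A_def B_def by auto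
  show "\<not> (\<exists>e\<in>E. Max B < e \<and> e < Min A)"
  proof
    assume "\<exists>e\<in>E. Max B < e \<and> e < Min A"
    then obtain e where "e \<in> E" "Max B < e" "e < Min A" by blast
    then show False
      using Min_le[OF A(1), of e] Max_ge[OF B(1), of e] unfolding A_def B_def by (cases "x \<le> e") (auto simp: not_le)
  qed
qed

lemma sweep_min_piercing:
  assumes R: "finite R" "\<forall>(l, r)\<in>R. fst l < 0 \<and> 0 \<le> fst r"
    and sw: "sweep R P" and "0 \<le> x" and "P x \<noteq> {}"
  shows "min_piercing (Ivals R x) (P x)"
proof (cases "x = 0")
  case True
  then show ?thesis using sw unfolding sweep_def by simp
next
  case False
  define E where "E = insert 0 (events R)"
  have x: "0 < x" using False \<open>0 \<le> x\<close> by simp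
  have "finite E" unfolding E_def using finite_events[OF R(1)] by simp
  moreover have "\<not> (\<forall>e\<in>E. e < x)" using sw \<open>P x \<noteq> {}\<close> unfolding sweep_def E_def by blast
  then obtain e' where "e' \<in> E" "x \<le> e'" by (auto simp: not_less)
  ultimately obtain x' x'' where xs: "x' \<in> E" "x'' \<in> E" "x' < x" "x \<le> x''"
      and consecutive: "\<not> (\<exists>e\<in>E. x' < e \<and> e < x'')"
    using consecutive_elements_around[of E 0 x e'] x unfolding E_def by blast
  have "\<forall>x' x''. x' \<in> E \<and> x'' \<in> E \<and> x' < x'' \<and> \<not> (\<exists>e\<in>E. x' < e \<and> e < x'') \<longrightarrow>
      (\<exists>Q. reduce_piercing (Ivals R x'') (P x') Q \<and> (\<forall>y. x' < y \<and> y \<le> x'' \<longrightarrow> P y = Q))"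
    using sw unfolding sweep_def E_def by blast
  then obtain Q where Q: "reduce_piercing (Ivals R x'') (P x') Q" "\<forall>y. x' < y \<and> y \<le> x'' \<longrightarrow> P y = Q"
    using xs consecutive by (meson order_less_le_trans)
  have "Ivals R x = Ivals R x''"
  proof (rule Ivals_eq_if_same_active_pairs[OF R(2) \<open>0 \<le> x\<close>])
    show "0 \<le> x''" using xs x by linarith
    show "\<forall>(l, r)\<in>R. x \<le> fst r \<longleftrightarrow> x'' \<le> fst r"
    proof (clarify)
      fix l r assume "(l, r) \<in> R"
      then have "fst r \<in> E" using R(2) right_end_in_events unfolding E_def by fast
      then show "x \<le> fst r \<longleftrightarrow> x'' \<le> fst r" using xs consecutive by fastforce
    qed
  qed
  then show ?thesis using reduce_piercing_min_piercing[OF Q(1)] Q(2) xs by simp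
qed

lemma hor_part_pierces_Ivals:
  assumes R: "\<forall>(l, r)\<in>R. fst l < 0 \<and> 0 \<le> fst r" and N: "feasible_GMMN R N" and "0 \<le> x"
  shows "piercing (Ivals R x) (snd ` ({z. fst z = x} \<inter> hor_part N))"
  unfolding piercing_def
proof (intro conjI ballI)
  show "finite (snd ` ({z. fst z = x} \<inter> hor_part N))"
    using N finite_vline_Int_hor_part unfolding feasible_GMMN_def by blast
next
  fix J assume "J \<in> Ivals R x"
  then obtain l r where lr: "(l, r) \<in> R" "J = {y. (x, y) \<in> right_part (bbox (l, r))}" "J \<noteq> {}"
    by (rule Ivals_memE)
  have h: "fst l < 0" "0 \<le> fst r" using R lr(1) by auto
  then have J: "x \<le> fst r" "J = {min (snd l) (snd r) .. max (snd l) (snd r)}"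
    using lr(2,3) vline_section_right_part_bbox[OF h \<open>0 \<le> x\<close>] by (auto split: if_splits)
  obtain vs where "M_path N l r vs" using N lr(1) unfolding feasible_GMMN_def has_M_path_def by auto
  then obtain y where "(x, y) \<in> hor_part N" "y \<in> J"
    using M_path_crosses_vline[of N l r vs x] h J \<open>0 \<le> x\<close> by auto
  then show "J \<inter> snd ` ({z. fst z = x} \<inter> hor_part N) \<noteq> {}" by force
qed

theorem mainTheorem11:
  fixes R :: "(point \<times> point) set" and N :: "point set" and P :: "real \<Rightarrow> real set" and x :: real
  assumes "finite R"
    and "\<forall>(l, r)\<in>R. fst l < 0 \<and> 0 \<le> fst r"
    and "optimum_GMMN R N"
    and "sweep R P"
    and "0 \<le> x"
  shows "card (P x) \<le> 2 * card ({z. fst z = x} \<inter> (hor_part N \<inter> {z. 0 \<le> fst z}))"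
proof (cases "P x = {}")
  case True
  then show ?thesis by simp
next
  case False
  define H where "H = {z. fst z = x} \<inter> hor_part N"
  have feasible: "feasible_GMMN R N" using assms(3) unfolding optimum_GMMN_def by simp
  have "card (P x) \<le> 2 * card (snd ` H)"
  proof (rule card_min_piercing_intervals_le)
    show "min_piercing (Ivals R x) (P x)" using sweep_min_piercing assms(1,2,4,5) False by blast
    show "piercing (Ivals R x) (snd ` H)" unfolding H_def using hor_part_pierces_Ivals assms(2,5) feasible by blast
    show "\<forall>J\<in>Ivals R x. is_interval J" using Ivals_is_interval assms(2,5) by blast
  qed
  also have "\<dots> \<le> 2 * card H"
    using card_image_le finite_vline_Int_hor_part feasible unfolding H_def feasible_GMMN_def by auto
  also have "H = {z. fst z = x} \<inter> (hor_part N \<inter> {z. 0 \<le> fst z})" unfolding H_def using assms(5) by auto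
  finally show ?thesis .
qed

end
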